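(* Let $d\ge 1$ and let $k=G_\ell:\mathbb{R}^d\to\mathbb{R}$ be the squared-exponential kernel $G_\ell(x)=\exp\!\left(-\frac{|x|^2}{2\ell^2}\right)$, with length scale $0<\ell\le 2/\sqrt{\pi}$. Let $0<h<1$. Then for every $x\in[-1,1]^d$, \[ \Biggl|\sum_{n\in\mathbb{Z}^d,\ n\neq \mathbf{0}} k\!\left(x+\frac{n}{h}\right)\Biggr| \;\le\; 2d\,3^d\,e^{-\frac12\left(\frac{h^{-1}-1}{\ell}\right)^2}. \] Moreover, for every $m\in\mathbb{N}$ and every $x\in\mathbb{R}^d$, \[ \Biggl| h^d\sum_{j\in\mathbb{Z}^d,\ j\notin J_m} \hat k(jh)\,e^{2\pi i h\langle j,x\rangle}\Biggr| \;\le\; 2d\,4^d\,e^{-2(\pi\ell h m)^2}. \]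
   Context: $|\cdot|$ denotes the Euclidean norm and $\langle\cdot,\cdot\rangle$ the Euclidean inner product on $\mathbb{R}^d$. The Fourier transform convention is $\hat k(\xi)=\int_{\mathbb{R}^d} k(x)e^{-2\pi i\langle \xi,x\rangle}\,dx$ for $\xi\in\mathbb{R}^d$ (so that $\hat G_\ell(\xi)=(\sqrt{2\pi}\ell)^d e^{-2|\pi\ell\xi|^2}$). For $m\in\mathbb{N}$, $J_m=\{-m,-m+1,\dots,m\}^d\subset\mathbb{Z}^d$. *)

theory Defs
  imports "HOL-Analysis.Analysis"
begin

definition sq_exp_kernel :: "real \<Rightarrow> real ^ 'n \<Rightarrow> real" where
  "sq_exp_kernel l x = exp (- ((norm x)^2 / (2 * l^2)))"

definition fourier_tr :: "(real ^ 'n \<Rightarrow> real) \<Rightarrow> real ^ 'n \<Rightarrow> complex" where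
  "fourier_tr k \<xi> = integral UNIV (\<lambda>x. complex_of_real (k x) * exp (- 2 * pi * \<i> * complex_of_real (\<xi> \<bullet> x)))"

definition lat :: "int ^ 'n \<Rightarrow> real ^ 'n" where
  "lat n = (\<chi> i. real_of_int (n $ i))"

definition Jset :: "nat \<Rightarrow> (int ^ 'n) set" where
  "Jset m = {j. \<forall>i. \<bar>j $ i\<bar> \<le> int m}"

end

theory Submission
  imports Defs "HOL-Probability.Characteristic_Functions"
begin

(*
  The kernel and its Fourier transform (sqrt (2 pi) l)^d exp (-2 pi^2 l^2 |xi|^2) factor over
  the coordinates, so both lattice sums are sums of products of one-dimensional Gaussians.
  A lattice point outside the excluded set has some coordinate outside the corresponding
  one-dimensional set; a union bound over the d coordinates bounds the d-dimensional sum by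
  d times a one-dimensional tail times the (d-1)-st power of a full one-dimensional sum.

  For the kernel the one-dimensional sums are sum_k exp (-c (x + k/h)^2) with rate
  c = 1/(2 l^2) >= 25/64: the full sum is at most 3 by a numerical estimate, and for |x| <= 1
  the sum over k ~= 0 is at most 6 exp (-c (1/h - 1)^2), since |x + k/h| >= 1/h - 1 + (|k| - 1).
  For the Fourier sum put a = pi l h and Q = sum_{n>=1} exp (-2 a^2 n^2): the full sum is
  1 + 2 Q, the tail beyond m is at most 2 exp (-2 a^2 m^2) Q, and the factor
  h sqrt (2 pi) l = a sqrt (2/pi) contributed by each coordinate keeps
  a sqrt (2/pi) (1 + 2 Q) below 4.
*)

lemma exp_minus_le_inverse_partial_sum:
  fixes v :: real
  assumes "0 \<le> v" "0 < N"
  shows "exp (- v) \<le> 1 / (\<Sum>n<N. v ^ n / fact n)"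
proof -
  have pos: "0 < (\<Sum>n<N. v ^ n / fact n)"
    using assms by (intro sum_pos2[of _ 0]) auto
  have "summable (\<lambda>n. v ^ n / fact n)"
    using summable_exp_generic[of v] by (simp add: divide_inverse mult.commute)
  then have "(\<Sum>n<N. v ^ n / fact n) \<le> (\<Sum>n. v ^ n / fact n)"
    using assms by (intro sum_le_suminf) auto
  also have "\<dots> = exp v"
    by (simp add: exp_def divide_inverse mult.commute)
  finally show ?thesis
    using pos by (simp add: exp_minus field_simps)
qed

lemma summable_geometric_majorant:
  fixes f :: "nat \<Rightarrow> real"
  assumes "\<And>n. 0 \<le> f n" "\<And>n. f n \<le> A * r ^ n" "0 \<le> r" "r < 1"
  shows "summable f" "suminf f \<le> A / (1 - r)"
proof -
  have geometric: "summable (\<lambda>n. A * r ^ n)"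
    using assms by (intro summable_mult summable_geometric) auto
  show "summable f"
    by (rule summable_comparison_test'[OF geometric]) (use assms in auto)
  have "suminf f \<le> (\<Sum>n. A * r ^ n)"
    by (rule suminf_le) (use assms geometric \<open>summable f\<close> in auto)
  also have "\<dots> = A / (1 - r)"
    using assms by (simp add: suminf_mult suminf_geometric divide_simps)
  finally show "suminf f \<le> A / (1 - r)" .
qed

lemma has_sum_int_rays:
  fixes g :: "int \<Rightarrow> real"
  assumes nonneg: "\<And>k. 0 \<le> g k" and "q < p"
    and summable: "summable (\<lambda>n. g (p + int n))" "summable (\<lambda>n. g (q - int n))"
  shows "(g has_sum ((\<Sum>n. g (p + int n)) + (\<Sum>n. g (q - int n)))) ({p..} \<union> {..q})"
proof -
  have "bij_betw (\<lambda>n. p + int n) UNIV {p..}"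
    by (rule bij_betwI[where g = "\<lambda>k. nat (k - p)"]) auto
  then have up: "(g has_sum (\<Sum>n. g (p + int n))) {p..}"
    using has_sum_reindex_bij_betw[of "\<lambda>n. p + int n" UNIV "{p..}" g]
      sums_nonneg_imp_has_sum[OF summable_sums[OF summable(1)]] nonneg by auto
  have "bij_betw (\<lambda>n. q - int n) UNIV {..q}"
    by (rule bij_betwI[where g = "\<lambda>k. nat (q - k)"]) auto
  then have down: "(g has_sum (\<Sum>n. g (q - int n))) {..q}"
    using has_sum_reindex_bij_betw[of "\<lambda>n. q - int n" UNIV "{..q}" g]
      sums_nonneg_imp_has_sum[OF summable_sums[OF summable(2)]] nonneg by auto
  show ?thesis
    using \<open>q < p\<close> by (intro has_sum_Un_disjoint up down) auto
qed

lemma infsum_int_rays_le: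
  fixes g :: "int \<Rightarrow> real"
  assumes nonneg: "\<And>k. 0 \<le> g k" and "q < p" and u: "summable u"
    and up: "\<And>n. g (p + int n) \<le> u n" and down: "\<And>n. g (q - int n) \<le> u n"
  shows "g summable_on {p..} \<union> {..q}" "infsum g ({p..} \<union> {..q}) \<le> 2 * suminf u"
proof -
  have summable: "summable (\<lambda>n. g (p + int n))" "summable (\<lambda>n. g (q - int n))"
    using nonneg up down by (auto intro: summable_comparison_test'[OF u])
  note rays = has_sum_int_rays[OF nonneg \<open>q < p\<close> summable]
  then show "g summable_on {p..} \<union> {..q}"
    by (rule has_sum_imp_summable)
  have "(\<Sum>n. g (p + int n)) + (\<Sum>n. g (q - int n)) \<le> suminf u + suminf u"
    using summable u up down by (intro add_mono suminf_le) auto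
  then show "infsum g ({p..} \<union> {..q}) \<le> 2 * suminf u"
    using infsumI[OF rays] by simp
qed

lemma bij_betw_vec_nth: "bij_betw vec_nth {x :: 'a ^ 'n. \<forall>i. x $ i \<in> A i} (PiE UNIV A)"
  by (rule bij_betwI[where g = vec_lambda]) (auto simp: PiE_def extensional_def)

lemma infsum_prod_vec:
  fixes f :: "'n::finite \<Rightarrow> 'a::countable \<Rightarrow> real"
  assumes nonneg: "\<And>i k. 0 \<le> f i k" and summable: "\<And>i. f i summable_on A i"
  shows "(\<lambda>x. \<Prod>i\<in>UNIV. f i (x $ i)) summable_on {x. \<forall>i. x $ i \<in> A i}"
    and "(\<Sum>\<^sub>\<infinity>x\<in>{x. \<forall>i. x $ i \<in> A i}. \<Prod>i\<in>UNIV. f i (x $ i)) = (\<Prod>i\<in>UNIV. infsum (f i) (A i))"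
proof -
  have abs_summable: "(\<lambda>k. norm (f i k)) summable_on A i" for i
    using summable[of i] by (rule summable_on_cong[THEN iffD1, rotated]) (simp add: nonneg)
  have "Infinite_Set_Sum.abs_summable_on (\<lambda>g. \<Prod>i\<in>UNIV. f i (g i)) (PiE UNIV A)"
    by (intro abs_summable_on_prod_PiE abs_summable_equivalent[THEN iffD1]) (use abs_summable in auto)
  then have "(\<lambda>g. \<Prod>i\<in>UNIV. f i (g i)) summable_on PiE UNIV A"
    by (rule abs_summable_summable[OF abs_summable_equivalent[THEN iffD2]])
  then show "(\<lambda>x. \<Prod>i\<in>UNIV. f i (x $ i)) summable_on {x. \<forall>i. x $ i \<in> A i}"
    using summable_on_reindex_bij_betw[OF bij_betw_vec_nth, of "\<lambda>g. \<Prod>i\<in>UNIV. f i (g i)" A] by simp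
  have "(\<Sum>\<^sub>\<infinity>x\<in>{x. \<forall>i. x $ i \<in> A i}. \<Prod>i\<in>UNIV. f i (x $ i))
      = (\<Sum>\<^sub>\<infinity>g\<in>PiE UNIV A. \<Prod>i\<in>UNIV. f i (g i))"
    using infsum_reindex_bij_betw[OF bij_betw_vec_nth, of "\<lambda>g. \<Prod>i\<in>UNIV. f i (g i)" A] by simp
  also have "\<dots> = (\<Prod>i\<in>UNIV. infsum (f i) (A i))"
    by (rule infsum_prod_PiE_abs) (use abs_summable in auto)
  finally show "(\<Sum>\<^sub>\<infinity>x\<in>{x. \<forall>i. x $ i \<in> A i}. \<Prod>i\<in>UNIV. f i (x $ i)) = (\<Prod>i\<in>UNIV. infsum (f i) (A i))" .
qed

lemma infsum_prod_vec_coordinate_in: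
  fixes f :: "'n::finite \<Rightarrow> 'a::countable \<Rightarrow> real"
  assumes nonneg: "\<And>i k. 0 \<le> f i k" and summable: "\<And>i. f i summable_on UNIV"
  shows "(\<Sum>\<^sub>\<infinity>x\<in>{x. x $ i \<in> B}. \<Prod>j\<in>UNIV. f j (x $ j))
    = infsum (f i) B * (\<Prod>j\<in>UNIV - {i}. infsum (f j) UNIV)"
proof -
  define A where "A j = (if j = i then B else UNIV)" for j
  have set: "{x. x $ i \<in> B} = {x. \<forall>j. x $ j \<in> A j}"
    by (auto simp: A_def)
  have "(\<Sum>\<^sub>\<infinity>x\<in>{x. x $ i \<in> B}. \<Prod>j\<in>UNIV. f j (x $ j)) = (\<Prod>j\<in>UNIV. infsum (f j) (A j))"
    unfolding set using nonneg summable
    by (intro infsum_prod_vec(2)) (auto simp: A_def intro: summable_on_subset_banach)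
  also have "\<dots> = infsum (f i) (A i) * (\<Prod>j\<in>UNIV - {i}. infsum (f j) (A j))"
    by (rule prod.remove) auto
  also have "\<dots> = infsum (f i) B * (\<Prod>j\<in>UNIV - {i}. infsum (f j) UNIV)"
    by (auto simp: A_def intro!: prod.cong)
  finally show ?thesis .
qed

lemma infsum_UN_le:
  fixes f :: "'a \<Rightarrow> real"
  assumes "finite I" and nonneg: "\<And>x. 0 \<le> f x" and "f summable_on (\<Union>i\<in>I. A i)"
  shows "infsum f (\<Union>i\<in>I. A i) \<le> (\<Sum>i\<in>I. infsum f (A i))"
  using assms(1,3)
proof (induction I rule: finite_induct)
  case (insert i I)
  let ?U = "\<Union>j\<in>I. A j"
  have summable: "f summable_on ?U" "f summable_on A i" "f summable_on ?U - A i"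
    using insert.prems by (auto intro: summable_on_subset_banach)
  have "infsum f (\<Union>j\<in>insert i I. A j) = infsum f (A i \<union> (?U - A i))"
    by (rule arg_cong[where f = "infsum f"]) auto
  also have "\<dots> = infsum f (A i) + infsum f (?U - A i)"
    using summable by (intro infsum_Un_disjoint) auto
  finally have "infsum f (\<Union>j\<in>insert i I. A j) = infsum f (A i) + infsum f (?U - A i)" .
  moreover have "infsum f (?U - A i) \<le> infsum f ?U"
    using summable nonneg by (intro infsum_mono_neutral) auto
  ultimately show ?case
    using insert summable by simp
qed simp

lemma infsum_prod_vec_some_coordinate_le:
  fixes f :: "'n::finite \<Rightarrow> 'a::countable \<Rightarrow> real" and \<tau> \<phi> :: real
  assumes nonneg: "\<And>i k. 0 \<le> f i k" and summable: "\<And>i. f i summable_on UNIV"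
    and part: "\<And>i. infsum (f i) B \<le> \<tau>" and total: "\<And>i. infsum (f i) UNIV \<le> \<phi>"
  shows "(\<Sum>\<^sub>\<infinity>x\<in>{x. \<exists>i. x $ i \<in> B}. \<Prod>j\<in>UNIV. f j (x $ j))
    \<le> CARD('n) * \<tau> * \<phi> ^ (CARD('n) - 1)"
proof -
  let ?G = "\<lambda>x. \<Prod>j\<in>UNIV. f j (x $ j)"
  have "?G summable_on UNIV"
    using infsum_prod_vec(1)[OF nonneg summable] by simp
  then have summable_union: "?G summable_on (\<Union>i. {x. x $ i \<in> B})"
    by (rule summable_on_subset_banach) simp
  have "infsum ?G {x. \<exists>i. x $ i \<in> B} = infsum ?G (\<Union>i. {x. x $ i \<in> B})"
    by (rule arg_cong[where f = "infsum ?G"]) auto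
  also have "\<dots> \<le> (\<Sum>i\<in>UNIV. infsum ?G {x. x $ i \<in> B})"
    by (rule infsum_UN_le) (use summable_union nonneg in \<open>auto intro: prod_nonneg\<close>)
  also have "\<dots> \<le> (\<Sum>i\<in>(UNIV :: 'n set). \<tau> * (\<Prod>j\<in>UNIV - {i}. \<phi>))"
    unfolding infsum_prod_vec_coordinate_in[OF nonneg summable]
    using nonneg part total
    by (intro sum_mono mult_mono prod_mono) (auto intro: infsum_nonneg prod_nonneg order.trans[OF _ part])
  also have "\<dots> = CARD('n) * \<tau> * \<phi> ^ (CARD('n) - 1)"
    by (simp add: card_Diff_singleton)
  finally show ?thesis .
qed

lemma power2_norm_eq_sum_Basis:
  fixes x :: "'a::euclidean_space"
  shows "(norm x)^2 = (\<Sum>b\<in>Basis. (x \<bullet> b)^2)"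
  using euclidean_inner[of x x] power2_norm_eq_inner[of x] by (simp add: power2_eq_square)

lemma power2_norm_vec_eq_sum:
  fixes x :: "real ^ 'n"
  shows "(norm x)^2 = (\<Sum>i\<in>UNIV. (x $ i)^2)"
  unfolding power2_norm_eq_inner inner_vec_def by (simp add: power2_eq_square)

lemma std_normal_iexp_integral:
  fixes t :: real
  shows "integrable lborel (\<lambda>x. std_normal_density x *\<^sub>R iexp (t * x))"
    and "(LINT x|lborel. std_normal_density x *\<^sub>R iexp (t * x)) = complex_of_real (exp (- (t^2) / 2))"
proof -
  interpret real_distribution std_normal_distribution
    by (rule real_dist_normal_dist)
  have "integrable std_normal_distribution (\<lambda>x. iexp (t * x))"
    by (rule integrable_iexp) auto
  then show "integrable lborel (\<lambda>x. std_normal_density x *\<^sub>R iexp (t * x))"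
    by (subst (asm) integrable_density) (auto simp: normal_density_nonneg)
  have "char std_normal_distribution t = complex_of_real (exp (- (t^2) / 2))"
    by (simp add: char_std_normal_distribution)
  then show "(LINT x|lborel. std_normal_density x *\<^sub>R iexp (t * x)) = complex_of_real (exp (- (t^2) / 2))"
    unfolding char_def by (subst (asm) integral_density) (auto simp: normal_density_nonneg)
qed

lemma gaussian_fourier_1d:
  fixes l s :: real
  assumes l: "0 < l"
  defines "f \<equiv> \<lambda>t. complex_of_real (exp (- (t^2 / (2 * l^2))))
    * exp (- 2 * pi * \<i> * complex_of_real (s * t))"
  shows "integrable lborel f"
    and "integral\<^sup>L lborel f = complex_of_real (sqrt (2 * pi) * l * exp (- 2 * pi^2 * l^2 * s^2))"
proof -
  define \<omega> where "\<omega> = - 2 * pi * s * l"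
  have rescaled: "f (0 + l * x) = sqrt (2 * pi) *\<^sub>R (std_normal_density x *\<^sub>R iexp (\<omega> * x))" for x
  proof -
    have "exp (- ((l * x)^2 / (2 * l^2))) = exp (- (x^2) / 2)"
      using l by (simp add: power_mult_distrib)
    moreover have "- 2 * pi * \<i> * complex_of_real (s * (l * x)) = \<i> * complex_of_real (\<omega> * x)"
      by (simp add: \<omega>_def algebra_simps)
    ultimately show ?thesis
      unfolding f_def std_normal_density_def by (simp add: scaleR_conv_of_real)
  qed
  have "integrable lborel (\<lambda>x. f (0 + l * x))"
    unfolding rescaled by (intro integrable_scaleR_right std_normal_iexp_integral(1))
  then show "integrable lborel f"
    using lborel_integrable_real_affine_iff[of l f 0] l by simp
  have "integral\<^sup>L lborel f = \<bar>l\<bar> *\<^sub>R (LINT x|lborel. f (0 + l * x))"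
    using l by (intro lborel_integral_real_affine) simp
  also have "\<dots> = l *\<^sub>R (sqrt (2 * pi) *\<^sub>R complex_of_real (exp (- (\<omega>^2) / 2)))"
    unfolding rescaled integral_scaleR_right std_normal_iexp_integral(2) using l by simp
  moreover have "\<omega>^2 / 2 = 2 * pi^2 * l^2 * s^2"
    by (simp add: \<omega>_def power_mult_distrib)
  ultimately show "integral\<^sup>L lborel f = complex_of_real (sqrt (2 * pi) * l * exp (- 2 * pi^2 * l^2 * s^2))"
    by (simp add: scaleR_conv_of_real)
qed

lemma lborel_integral_prod_coordinates:
  fixes g :: "'a::euclidean_space \<Rightarrow> real \<Rightarrow> complex"
  assumes integrable: "\<And>b. b \<in> Basis \<Longrightarrow> integrable lborel (g b)"
  shows "integrable lborel (\<lambda>x::'a. \<Prod>b\<in>Basis. g b (x \<bullet> b))"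
    and "(LINT x|lborel. (\<Prod>b\<in>Basis. g b (x \<bullet> b))) = (\<Prod>b\<in>Basis. integral\<^sup>L lborel (g b))"
proof -
  interpret product_sigma_finite "\<lambda>_::'a. lborel"
    by standard
  define T where "T = (\<lambda>f. \<Sum>b\<in>(Basis::'a set). f b *\<^sub>R b)"
  have T_measurable: "T \<in> measurable (\<Pi>\<^sub>M b\<in>Basis. lborel) borel"
    unfolding T_def by measurable
  have g_measurable: "g b \<in> borel_measurable borel" if "b \<in> Basis" for b
    using integrable[OF that] by (simp add: borel_measurable_integrable)
  have G_measurable: "(\<lambda>x::'a. \<Prod>b\<in>Basis. g b (x \<bullet> b)) \<in> borel_measurable borel"
    by (intro borel_measurable_prod measurable_compose[OF _ g_measurable]) auto
  have "T f \<bullet> b = f b" if "b \<in> Basis" for f b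
    unfolding T_def using that by (simp add: inner_sum_left inner_Basis if_distrib cong: if_cong)
  then have coordinates: "(\<Prod>b\<in>Basis. g b (T f \<bullet> b)) = (\<Prod>b\<in>Basis. g b (f b))" for f
    by (intro prod.cong) auto
  have "integrable (\<Pi>\<^sub>M b\<in>Basis. lborel) (\<lambda>f. \<Prod>b\<in>Basis. g b (f b))"
    by (intro product_integrable_prod integrable) auto
  then show "integrable lborel (\<lambda>x::'a. \<Prod>b\<in>Basis. g b (x \<bullet> b))"
    by (subst lborel_eq, subst integrable_distr_eq[OF T_measurable[unfolded T_def] G_measurable])
      (simp add: coordinates[unfolded T_def])
  have "(LINT x|lborel. (\<Prod>b\<in>Basis. g b (x \<bullet> b)))
      = (LINT f|(\<Pi>\<^sub>M b\<in>Basis. lborel). (\<Prod>b\<in>Basis. g b (T f \<bullet> b)))"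
    unfolding T_def by (subst lborel_eq) (rule integral_distr[OF T_measurable[unfolded T_def] G_measurable])
  also have "\<dots> = (\<Prod>b\<in>Basis. integral\<^sup>L lborel (g b))"
    unfolding coordinates by (intro product_integral_prod integrable) auto
  finally show "(LINT x|lborel. (\<Prod>b\<in>Basis. g b (x \<bullet> b))) = (\<Prod>b\<in>Basis. integral\<^sup>L lborel (g b))" .
qed

lemma fourier_tr_sq_exp_kernel:
  fixes \<xi> :: "real ^ 'n"
  assumes l: "0 < l"
  shows "fourier_tr (sq_exp_kernel l) \<xi> =
     complex_of_real ((sqrt (2 * pi) * l) ^ CARD('n) * exp (- 2 * pi^2 * l^2 * (norm \<xi>)^2))"
proof -
  define g where "g b t = complex_of_real (exp (- (t^2 / (2 * l^2))))
    * exp (- 2 * pi * \<i> * complex_of_real ((\<xi> \<bullet> b) * t))" for b :: "real ^ 'n" and t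
  have integrable: "integrable lborel (g b)" for b
    unfolding g_def[abs_def] using gaussian_fourier_1d(1)[OF l] by blast
  have integral: "integral\<^sup>L lborel (g b)
      = complex_of_real (sqrt (2 * pi) * l * exp (- 2 * pi^2 * l^2 * (\<xi> \<bullet> b)^2))" for b
    unfolding g_def[abs_def] using gaussian_fourier_1d(2)[OF l] by blast
  have factor: "complex_of_real (sq_exp_kernel l x) * exp (- 2 * pi * \<i> * complex_of_real (\<xi> \<bullet> x))
      = (\<Prod>b\<in>Basis. g b (x \<bullet> b))" for x :: "real ^ 'n"
  proof -
    have "sq_exp_kernel l x = (\<Prod>b\<in>Basis. exp (- ((x \<bullet> b)^2 / (2 * l^2))))"
      unfolding sq_exp_kernel_def power2_norm_eq_sum_Basis
      by (simp add: exp_sum[symmetric] sum_divide_distrib sum_negf)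
    moreover have "exp (- 2 * pi * \<i> * complex_of_real (\<xi> \<bullet> x)) =
       (\<Prod>b\<in>Basis. exp (- 2 * pi * \<i> * complex_of_real ((\<xi> \<bullet> b) * (x \<bullet> b))))"
      by (simp add: exp_sum[symmetric] euclidean_inner[of \<xi> x] sum_distrib_left)
    ultimately show ?thesis
      unfolding g_def by (simp add: prod.distrib)
  qed
  have "fourier_tr (sq_exp_kernel l) \<xi> = integral UNIV (\<lambda>x::real ^ 'n. \<Prod>b\<in>Basis. g b (x \<bullet> b))"
    unfolding fourier_tr_def factor ..
  also have "\<dots> = (LINT x|lborel. (\<Prod>b\<in>Basis. g b (x \<bullet> b)))"
    by (intro integral_unique has_integral_integral_lborel lborel_integral_prod_coordinates(1) integrable)
  also have "\<dots> = (\<Prod>b\<in>Basis. integral\<^sup>L lborel (g b))"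
    by (intro lborel_integral_prod_coordinates(2) integrable)
  also have "\<dots> = complex_of_real
      (\<Prod>b\<in>(Basis :: (real ^ 'n) set). sqrt (2 * pi) * l * exp (- 2 * pi^2 * l^2 * (\<xi> \<bullet> b)^2))"
    unfolding integral by simp
  also have "(\<Prod>b\<in>(Basis :: (real ^ 'n) set). sqrt (2 * pi) * l * exp (- 2 * pi^2 * l^2 * (\<xi> \<bullet> b)^2))
      = (sqrt (2 * pi) * l) ^ CARD('n) * exp (- 2 * pi^2 * l^2 * (norm \<xi>)^2)"
    unfolding power2_norm_eq_sum_Basis[of \<xi>]
    by (simp add: prod.distrib exp_sum[symmetric] sum_distrib_left)
  finally show ?thesis .
qed

(* 25/64 is a rational lower bound for pi/8, the least rate 1/(2 l^2) allowed by l <= 2/sqrt pi. *)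
definition gauss_min :: "real \<Rightarrow> real" where
  "gauss_min t = exp (- (25/64) * t^2)"

lemma gauss_min_nonneg: "0 \<le> gauss_min t"
  by (simp add: gauss_min_def)

lemma gauss_min_antimono: "0 \<le> s \<Longrightarrow> s \<le> t \<Longrightarrow> gauss_min t \<le> gauss_min s"
  unfolding gauss_min_def by (simp add: power_mono)

lemma gauss_min_eighths_le:
  "gauss_min (real j / 8 + real n) \<le> 1 / (\<Sum>i<6. (25 * real (j + 8 * n)^2 / 4096) ^ i / fact i)"
proof -
  have "gauss_min (real j / 8 + real n) = exp (- (25 * real (j + 8 * n)^2 / 4096))"
    unfolding gauss_min_def by (simp add: power2_eq_square field_simps)
  also have "\<dots> \<le> 1 / (\<Sum>i<6. (25 * real (j + 8 * n)^2 / 4096) ^ i / fact i)"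
    by (rule exp_minus_le_inverse_partial_sum) auto
  finally show ?thesis .
qed

(* The exact maximum over k is about 2.964; the bound 2.995 leaves room for the two tails of
   gauss_min_tail_le, and Taylor polynomials of degree 5 are just precise enough for it. *)
lemma gauss_min_grid_sum_le:
  assumes "k \<le> (7::nat)"
  shows "(\<Sum>n<4. gauss_min (real k / 8 + real n)) + (\<Sum>n<4. gauss_min (real (7 - k) / 8 + real n)) \<le> 2.995"
proof -
  let ?P = "\<lambda>j n. \<Sum>i<6. (25 * real (j + 8 * n)^2 / 4096 :: real) ^ i / fact i"
  have "k = 0 \<or> k = 1 \<or> k = 2 \<or> k = 3 \<or> k = 4 \<or> k = 5 \<or> k = 6 \<or> k = 7"
    using assms by auto
  then have "(\<Sum>n<4. 1 / ?P k n) + (\<Sum>n<4. 1 / ?P (7 - k) n) \<le> 2.995"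
    by (elim disjE) (simp_all add: power_divide lessThan_nat_numeral fact_numeral)
  moreover have "(\<Sum>n<4. gauss_min (real k / 8 + real n)) + (\<Sum>n<4. gauss_min (real (7 - k) / 8 + real n))
      \<le> (\<Sum>n<4. 1 / ?P k n) + (\<Sum>n<4. 1 / ?P (7 - k) n)"
    using gauss_min_eighths_le[of k] gauss_min_eighths_le[of "7 - k"] by (intro add_mono sum_mono) auto
  ultimately show ?thesis
    by linarith
qed

lemma gauss_min_pair_sum_le:
  assumes "0 \<le> a" "0 \<le> b" "1 \<le> a + b"
  shows "(\<Sum>n<4. gauss_min (a + real n)) + (\<Sum>n<4. gauss_min (b + real n)) \<le> 2.995"
proof -
  obtain k :: nat where k: "k \<le> 7" "real k / 8 \<le> a" "real (7 - k) / 8 \<le> b"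
  proof (cases "7/8 \<le> a")
    case True
    then show ?thesis
      using that[of 7] assms by auto
  next
    case False
    define k where "k = nat \<lfloor>8 * a\<rfloor>"
    have "real k \<le> 8 * a" "8 * a < real k + 1" "k \<le> 6"
      unfolding k_def using assms(1) False by linarith+
    moreover have "real (7 - k) = 7 - real k"
      using \<open>k \<le> 6\<close> by simp
    ultimately show ?thesis
      using that[of k] assms by auto
  qed
  have "(\<Sum>n<4. gauss_min (a + real n)) + (\<Sum>n<4. gauss_min (b + real n))
     \<le> (\<Sum>n<4. gauss_min (real k / 8 + real n)) + (\<Sum>n<4. gauss_min (real (7 - k) / 8 + real n))"
    using k by (intro add_mono sum_mono gauss_min_antimono) auto
  also have "\<dots> \<le> 2.995"
    by (rule gauss_min_grid_sum_le[OF k(1)])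
  finally show ?thesis .
qed

lemma gauss_min_tail_le:
  assumes "0 \<le> t"
  shows "summable (\<lambda>n. gauss_min (t + real (n + 4)))"
    and "(\<Sum>n. gauss_min (t + real (n + 4))) \<le> 1/400"
proof -
  define A r :: real where "A = exp (- (25/4))" and "r = exp (- (25/8))"
  have majorant: "gauss_min (t + real (n + 4)) \<le> A * r ^ n" for n
  proof -
    have "16 + 8 * real n \<le> (real n + 4)^2"
      by (simp add: power2_eq_square algebra_simps)
    also have "\<dots> \<le> (t + real (n + 4))^2"
      using assms by (intro power_mono) auto
    finally have "gauss_min (t + real (n + 4)) \<le> exp (- (25/4) - (25/8) * real n)"
      unfolding gauss_min_def by simp
    also have "\<dots> = A * r ^ n"
      unfolding A_def r_def by (simp add: exp_of_nat_mult[symmetric] mult.commute flip: exp_add)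
    finally show ?thesis .
  qed
  have r: "0 \<le> r" "r < 1"
    unfolding r_def by auto
  show "summable (\<lambda>n. gauss_min (t + real (n + 4)))"
    by (rule summable_geometric_majorant(1)[OF gauss_min_nonneg majorant r])
  let ?P = "\<lambda>v::real. \<Sum>i<9. v ^ i / fact i"
  have "A \<le> 1 / ?P (25/4)"
    unfolding A_def by (rule exp_minus_le_inverse_partial_sum) auto
  moreover have "r \<le> 1 / ?P (25/8)"
    unfolding r_def by (rule exp_minus_le_inverse_partial_sum) auto
  moreover have "0 \<le> 1 / ?P (25/4)" "1 / ?P (25/8) < 1"
    by (simp_all add: lessThan_nat_numeral fact_numeral power_divide)
  ultimately have "A / (1 - r) \<le> (1 / ?P (25/4)) / (1 - 1 / ?P (25/8))"
    by (intro frac_le) linarith+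
  also have "\<dots> \<le> 1/400"
    by (simp add: lessThan_nat_numeral fact_numeral power_divide)
  finally have "A / (1 - r) \<le> 1/400" .
  then show "(\<Sum>n. gauss_min (t + real (n + 4))) \<le> 1/400"
    using summable_geometric_majorant(2)[OF gauss_min_nonneg majorant r] by linarith
qed

lemma shifted_gauss_ray_sum_le:
  fixes c h t :: real
  assumes c: "25/64 \<le> c" and h: "0 < h" "h \<le> 1" and t: "0 \<le> t"
  shows "summable (\<lambda>n. exp (- c * (t + real n / h)^2))"
    and "(\<Sum>n. exp (- c * (t + real n / h)^2)) \<le> (\<Sum>n<4. gauss_min (t + real n)) + 1/400"
proof -
  define e where "e n = exp (- c * (t + real n / h)^2)" for n
  have e_le: "e n \<le> gauss_min (t + real n)" for n
  proof -
    have "real n \<le> real n / h"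
      using h by (simp add: field_simps mult_left_le_one_le)
    then have "(t + real n)^2 \<le> (t + real n / h)^2"
      using t by (intro power_mono) auto
    then have "25/64 * (t + real n)^2 \<le> c * (t + real n / h)^2"
      using c by (intro mult_mono) auto
    then show ?thesis
      unfolding e_def gauss_min_def by simp
  qed
  note tail = gauss_min_tail_le[OF t]
  have "norm (e n) \<le> gauss_min (t + real n)" for n
    using e_le by (simp add: e_def)
  then have summable_tail: "summable (\<lambda>n. e (n + 4))"
    by (intro summable_comparison_test'[OF tail(1)])
  then show summable: "summable (\<lambda>n. exp (- c * (t + real n / h)^2))"
    unfolding e_def by (subst (asm) summable_iff_shift)
  have "(\<Sum>n. e n) = (\<Sum>n. e (n + 4)) + (\<Sum>n<4. e n)"
    by (rule suminf_split_initial_segment) (use summable in \<open>simp add: e_def\<close>)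
  also have "(\<Sum>n. e (n + 4)) \<le> (\<Sum>n. gauss_min (t + real (n + 4)))"
    by (rule suminf_le[OF _ summable_tail tail(1)]) (rule e_le)
  also have "\<dots> \<le> 1/400"
    by (rule tail(2))
  finally show "(\<Sum>n. exp (- c * (t + real n / h)^2)) \<le> (\<Sum>n<4. gauss_min (t + real n)) + 1/400"
    using sum_mono[of "{..<4}" e "\<lambda>n. gauss_min (t + real n)"] e_le unfolding e_def by simp
qed

lemma gauss_min_nat_sum_le:
  shows "summable (\<lambda>n. gauss_min (real n))" and "(\<Sum>n. gauss_min (real n)) \<le> 3"
proof -
  have eq: "gauss_min (real n) = exp (- (25/64) * (0 + real n / 1)^2)" for n
    by (simp add: gauss_min_def)
  note ray = shifted_gauss_ray_sum_le[of "25/64" 1 0]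
  show "summable (\<lambda>n. gauss_min (real n))"
    unfolding eq using ray(1) by simp
  have "(\<Sum>n<4. gauss_min (0 + real n)) \<le> 2.995"
    using gauss_min_pair_sum_le[of 0 1] sum_nonneg[of "{..<4}" "\<lambda>n. gauss_min (1 + real n)"]
    by (simp add: gauss_min_nonneg)
  then show "(\<Sum>n. gauss_min (real n)) \<le> 3"
    unfolding eq using ray(2) by simp
qed

lemma shifted_gauss_lattice_sum_le_3:
  fixes c h x :: real
  assumes c: "25/64 \<le> c" and h: "0 < h" "h \<le> 1"
  shows "(\<lambda>k::int. exp (- c * (x + real_of_int k / h)^2)) summable_on UNIV"
    and "(\<Sum>\<^sub>\<infinity>k::int. exp (- c * (x + real_of_int k / h)^2)) \<le> 3"
proof -
  define g where "g k = exp (- c * (x + real_of_int k / h)^2)" for k :: int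
  \<comment> \<open>the points \<open>x + k/h\<close> form two rays starting at \<open>a, b \<ge> 0\<close> with \<open>a + b = 1/h \<ge> 1\<close>\<close>
  define k0 where "k0 = \<lceil>- x * h\<rceil>"
  define a where "a = x + real_of_int k0 / h"
  define b where "b = 1/h - a"
  have "- x * h \<le> real_of_int k0" "real_of_int k0 < - x * h + 1"
    unfolding k0_def by linarith+
  then have a: "0 \<le> a" and b: "0 \<le> b" and ab: "1 \<le> a + b"
    unfolding b_def a_def using h by (simp_all add: field_simps)
  have up: "g (k0 + int n) = exp (- c * (a + real n / h)^2)" for n
    unfolding g_def a_def by (simp add: add_divide_distrib algebra_simps)
  have down: "g (k0 - 1 - int n) = exp (- c * (b + real n / h)^2)" for n
  proof -
    have "x + real_of_int (k0 - 1 - int n) / h = - (b + real n / h)"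
      unfolding b_def a_def using h by (simp add: field_simps)
    then show ?thesis
      unfolding g_def by (simp only: power2_minus)
  qed
  note ray_a = shifted_gauss_ray_sum_le[OF c h a] and ray_b = shifted_gauss_ray_sum_le[OF c h b]
  have "summable (\<lambda>n. g (k0 + int n))" "summable (\<lambda>n. g (k0 - 1 - int n))"
    unfolding up down by (fact ray_a(1) ray_b(1))+
  then have rays:
    "(g has_sum ((\<Sum>n. g (k0 + int n)) + (\<Sum>n. g (k0 - 1 - int n)))) ({k0..} \<union> {..k0 - 1})"
    by (intro has_sum_int_rays) (auto simp: g_def)
  moreover have "{k0..} \<union> {..k0 - 1} = UNIV"
    by auto
  ultimately have sum: "(g has_sum ((\<Sum>n. g (k0 + int n)) + (\<Sum>n. g (k0 - 1 - int n)))) UNIV"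
    by simp
  then show "(\<lambda>k::int. exp (- c * (x + real_of_int k / h)^2)) summable_on UNIV"
    unfolding g_def by (rule has_sum_imp_summable)
  have "(\<Sum>n. g (k0 + int n)) + (\<Sum>n. g (k0 - 1 - int n))
      \<le> (\<Sum>n<4. gauss_min (a + real n)) + (\<Sum>n<4. gauss_min (b + real n)) + 2/400"
    unfolding up down using ray_a(2) ray_b(2) by simp
  also have "\<dots> \<le> 3"
    using gauss_min_pair_sum_le[OF a b ab] by simp
  finally show "(\<Sum>\<^sub>\<infinity>k::int. exp (- c * (x + real_of_int k / h)^2)) \<le> 3"
    using infsumI[OF sum] unfolding g_def by simp
qed

lemma gauss_le_gauss_mult_gauss_min:
  fixes c d y :: real
  assumes c: "25/64 \<le> c" and "0 \<le> d" and y: "d + real n \<le> \<bar>y\<bar>"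
  shows "exp (- c * y^2) \<le> exp (- c * d^2) * gauss_min (real n)"
proof -
  have "d^2 + (real n)^2 \<le> (d + real n)^2"
    using \<open>0 \<le> d\<close> by (simp add: power2_eq_square algebra_simps)
  also have "\<dots> \<le> y^2"
    using power_mono[OF y, of 2] \<open>0 \<le> d\<close> by simp
  finally have "c * (d^2 + (real n)^2) \<le> c * y^2"
    using c by (intro mult_left_mono) auto
  moreover have "25/64 * (real n)^2 \<le> c * (real n)^2"
    using c by (intro mult_right_mono) auto
  ultimately have "c * d^2 + 25/64 * (real n)^2 \<le> c * y^2"
    by (simp add: distrib_left)
  then show ?thesis
    unfolding gauss_min_def by (simp add: exp_add[symmetric])
qed

lemma shifted_gauss_lattice_sum_nonzero_le:
  fixes c h x :: real
  assumes c: "25/64 \<le> c" and h: "0 < h" "h \<le> 1" and x: "\<bar>x\<bar> \<le> 1"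
  shows "(\<Sum>\<^sub>\<infinity>k\<in>{k::int. k \<noteq> 0}. exp (- c * (x + real_of_int k / h)^2))
    \<le> 6 * exp (- c * (1/h - 1)^2)"
proof -
  define E where "E = exp (- c * (1/h - 1)^2)"
  have far: "1/h - 1 + real n \<le> (1 + real n) / h - 1" for n
  proof -
    have "h * real n \<le> real n"
      using h by (intro mult_left_le_one_le) auto
    then have "real n \<le> real n / h"
      using h by (simp add: field_simps)
    then show ?thesis
      by (simp add: add_divide_distrib)
  qed
  define g where "g k = exp (- c * (x + real_of_int k / h)^2)" for k :: int
  have up: "g (1 + int n) \<le> E * gauss_min (real n)" for n
    unfolding g_def E_def
  proof (rule gauss_le_gauss_mult_gauss_min[OF c])
    show "0 \<le> 1/h - 1"
      using h by simp
    have "1/h - 1 + real n \<le> x + (1 + real n) / h"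
      using far[of n] x by linarith
    then show "1/h - 1 + real n \<le> \<bar>x + real_of_int (1 + int n) / h\<bar>"
      by simp
  qed
  have down: "g (- 1 - int n) \<le> E * gauss_min (real n)" for n
    unfolding g_def E_def
  proof (rule gauss_le_gauss_mult_gauss_min[OF c])
    show "0 \<le> 1/h - 1"
      using h by simp
    have "1/h - 1 + real n \<le> - x + (1 + real n) / h"
      using far[of n] x by linarith
    also have "- x + (1 + real n) / h = - (x + real_of_int (- 1 - int n) / h)"
      by (simp add: diff_divide_distrib add_divide_distrib)
    finally show "1/h - 1 + real n \<le> \<bar>x + real_of_int (- 1 - int n) / h\<bar>"
      by linarith
  qed
  have "{1..} \<union> {..-1} = {k::int. k \<noteq> 0}"
    by auto
  moreover have "infsum g ({1..} \<union> {..-1}) \<le> 2 * (\<Sum>n. E * gauss_min (real n))"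
    using summable_mult[OF gauss_min_nat_sum_le(1)]
    by (intro infsum_int_rays_le(2)[where q = "-1" and p = 1, OF _ _ _ up down]) (auto simp: g_def)
  moreover have "(\<Sum>n. E * gauss_min (real n)) \<le> E * 3"
    using gauss_min_nat_sum_le by (simp add: suminf_mult E_def)
  ultimately show ?thesis
    unfolding g_def E_def by simp
qed

lemma gauss_pos_sum_le_geometric:
  fixes a :: real
  assumes "0 < a"
  shows "summable (\<lambda>n. exp (- 2 * a^2 * (real n + 1)^2))"
    and "(\<Sum>n. exp (- 2 * a^2 * (real n + 1)^2)) \<le> exp (- 2 * a^2) / (1 - exp (- 2 * a^2))"
proof -
  define r where "r = exp (- 2 * a^2)"
  have r: "0 \<le> r" "r < 1"
    unfolding r_def using assms by auto
  have majorant: "exp (- 2 * a^2 * (real n + 1)^2) \<le> r * r ^ n" for n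
  proof -
    have "real n + 1 \<le> (real n + 1)^2"
      by (simp add: power2_eq_square)
    then have "2 * a^2 * (real n + 1) \<le> 2 * a^2 * (real n + 1)^2"
      by (intro mult_left_mono) auto
    then have "exp (- 2 * a^2 * (real n + 1)^2) \<le> exp (real (Suc n) * (- 2 * a^2))"
      by (simp add: algebra_simps)
    also have "\<dots> = r * r ^ n"
      unfolding r_def exp_of_nat_mult by simp
    finally show ?thesis .
  qed
  show "summable (\<lambda>n. exp (- 2 * a^2 * (real n + 1)^2))"
    and "(\<Sum>n. exp (- 2 * a^2 * (real n + 1)^2)) \<le> exp (- 2 * a^2) / (1 - exp (- 2 * a^2))"
    using summable_geometric_majorant[OF _ majorant r] unfolding r_def by auto
qed

lemma gauss_pos_sum_nonneg:
  fixes a :: real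
  assumes "0 < a"
  shows "0 \<le> (\<Sum>n. exp (- 2 * a^2 * (real n + 1)^2))"
  by (intro suminf_nonneg gauss_pos_sum_le_geometric(1)[OF assms]) simp

lemma gauss_pos_sum_le_inverse:
  fixes a :: real
  assumes "0 < a"
  shows "(\<Sum>n. exp (- 2 * a^2 * (real n + 1)^2)) \<le> exp (1/2) / (2 * a)"
proof -
  define r where "r = exp (- 2 * a)"
  have r: "0 < r" "r < 1"
    unfolding r_def using assms by auto
  \<comment> \<open>completing the square: \<open>2 a\<^sup>2 N\<^sup>2 \<ge> 2 a N - 1/2\<close>\<close>
  have majorant: "exp (- 2 * a^2 * (real n + 1)^2) \<le> (exp (1/2) * r) * r ^ n" for n
  proof -
    have "0 \<le> (2 * a * (real n + 1) - 1)^2"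
      by simp
    then have "- 2 * a^2 * (real n + 1)^2 \<le> 1/2 + real (Suc n) * (- 2 * a)"
      by (simp add: power2_eq_square algebra_simps)
    then have "exp (- 2 * a^2 * (real n + 1)^2) \<le> exp (1/2 + real (Suc n) * (- 2 * a))"
      by simp
    also have "\<dots> = (exp (1/2) * r) * r ^ n"
      unfolding r_def exp_add exp_of_nat_mult by simp
    finally show ?thesis .
  qed
  have "(\<Sum>n. exp (- 2 * a^2 * (real n + 1)^2)) \<le> (exp (1/2) * r) / (1 - r)"
    using summable_geometric_majorant(2)[OF _ majorant] r by simp
  also have "\<dots> = exp (1/2) / (exp (2 * a) - 1)"
    using r unfolding r_def by (simp add: exp_minus field_simps)
  also have "\<dots> \<le> exp (1/2) / (2 * a)"
  proof -
    have "2 * a \<le> exp (2 * a) - 1"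
      using exp_ge_add_one_self[of "2 * a"] by linarith
    then show ?thesis
      using assms by (intro divide_left_mono) auto
  qed
  finally show ?thesis .
qed

lemma gauss_pos_sum_weighted_le:
  fixes a :: real
  assumes a: "0 < a" and \<beta>: "a * sqrt (2/pi) \<le> 2 * sqrt 2"
  shows "a * sqrt (2/pi) * (1 + 2 * (\<Sum>n. exp (- 2 * a^2 * (real n + 1)^2))) \<le> 4"
proof (cases "1 \<le> a")
  case True
  define r where "r = exp (- 2 * a^2)"
  have "exp (- 2) \<le> 1 / (\<Sum>i<5. (2::real) ^ i / fact i)"
    by (rule exp_minus_le_inverse_partial_sum) auto
  moreover have "r \<le> exp (- 2)"
  proof -
    have "1 * 1 \<le> a * a"
      using True by (intro mult_mono) auto
    then show ?thesis
      unfolding r_def by (simp add: power2_eq_square)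
  qed
  ultimately have "r \<le> 1/7"
    by (simp add: lessThan_nat_numeral fact_numeral)
  moreover have "0 \<le> r"
    unfolding r_def by simp
  ultimately have "r / (1 - r) \<le> 1/6"
    by (simp add: field_simps)
  then have "2 * (\<Sum>n. exp (- 2 * a^2 * (real n + 1)^2)) \<le> 1/3"
    using gauss_pos_sum_le_geometric(2)[OF a] unfolding r_def[symmetric] by linarith
  then have "a * sqrt (2/pi) * (1 + 2 * (\<Sum>n. exp (- 2 * a^2 * (real n + 1)^2))) \<le> 2 * sqrt 2 * (4/3)"
    using gauss_pos_sum_nonneg[OF a] by (intro mult_mono[OF \<beta>]) auto
  also have "\<dots> \<le> 4"
  proof -
    have "sqrt 2 \<le> 3/2"
      by (rule real_le_lsqrt) (auto simp: power2_eq_square)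
    then show ?thesis
      by simp
  qed
  finally show ?thesis .
next
  case False
  have "sqrt (2/pi) \<le> 1"
    using pi_gt3 by simp
  then have \<beta>1: "a * sqrt (2/pi) \<le> 1"
    using False a by (simp add: mult_le_one)
  have "a * sqrt (2/pi) * (\<Sum>n. exp (- 2 * a^2 * (real n + 1)^2)) \<le> a * 1 * (exp (1/2) / (2 * a))"
    using gauss_pos_sum_le_inverse[OF a] gauss_pos_sum_nonneg[OF a] \<open>sqrt (2/pi) \<le> 1\<close> a
    by (intro mult_mono mult_left_mono) auto
  also have "\<dots> \<le> 1"
    using a exp_bound[of "1/2::real"] by (simp add: power2_eq_square field_simps)
  finally show ?thesis
    using \<beta>1 by (simp add: distrib_left)
qed

lemma gauss_lattice_tail_le:
  fixes a :: real and m :: nat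
  assumes "0 < a"
  shows "(\<lambda>k::int. exp (- 2 * a^2 * (real_of_int k)^2)) summable_on {k. int m < \<bar>k\<bar>}"
    and "(\<Sum>\<^sub>\<infinity>k\<in>{k::int. int m < \<bar>k\<bar>}. exp (- 2 * a^2 * (real_of_int k)^2))
           \<le> 2 * exp (- 2 * a^2 * (real m)^2) * (\<Sum>n. exp (- 2 * a^2 * (real n + 1)^2))"
proof -
  define E where "E = exp (- 2 * a^2 * (real m)^2)"
  define w where "w k = exp (- 2 * a^2 * (real_of_int k)^2)" for k :: int
  define q where "q n = exp (- 2 * a^2 * (real n + 1)^2)" for n
  have decay: "w k \<le> E * q n" if "real m + real n + 1 \<le> \<bar>real_of_int k\<bar>" for k n
  proof -
    have "(real m)^2 + (real n + 1)^2 \<le> (real m + real n + 1)^2"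
      by (simp add: power2_eq_square algebra_simps)
    also have "\<dots> \<le> (real_of_int k)^2"
      using power_mono[OF that, of 2] by simp
    finally have "2 * a^2 * ((real m)^2 + (real n + 1)^2) \<le> 2 * a^2 * (real_of_int k)^2"
      by (intro mult_left_mono) auto
    then show ?thesis
      unfolding w_def E_def q_def by (simp add: algebra_simps flip: exp_add)
  qed
  have summable: "summable (\<lambda>n. E * q n)"
    unfolding q_def using gauss_pos_sum_le_geometric(1)[OF assms] by (rule summable_mult)
  have "{int m + 1..} \<union> {..- int m - 1} = {k. int m < \<bar>k\<bar>}"
    by auto
  moreover note infsum_int_rays_le[where p = "int m + 1" and q = "- int m - 1" and g = w, OF _ _ summable]
  moreover have "w (int m + 1 + int n) \<le> E * q n" "w (- int m - 1 - int n) \<le> E * q n" for n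
    by (intro decay; simp)+
  ultimately have "w summable_on {k. int m < \<bar>k\<bar>}"
    and "infsum w {k. int m < \<bar>k\<bar>} \<le> 2 * (\<Sum>n. E * q n)"
    by (auto simp: w_def)
  then show "(\<lambda>k::int. exp (- 2 * a^2 * (real_of_int k)^2)) summable_on {k. int m < \<bar>k\<bar>}"
    and "(\<Sum>\<^sub>\<infinity>k\<in>{k::int. int m < \<bar>k\<bar>}. exp (- 2 * a^2 * (real_of_int k)^2))
           \<le> 2 * exp (- 2 * a^2 * (real m)^2) * (\<Sum>n. exp (- 2 * a^2 * (real n + 1)^2))"
    using gauss_pos_sum_le_geometric(1)[OF assms] unfolding w_def E_def q_def by (simp_all add: suminf_mult)
qed

lemma gauss_lattice_sum_le:
  fixes a :: real
  assumes "0 < a"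
  shows "(\<lambda>k::int. exp (- 2 * a^2 * (real_of_int k)^2)) summable_on UNIV"
    and "(\<Sum>\<^sub>\<infinity>k::int. exp (- 2 * a^2 * (real_of_int k)^2)) \<le> 1 + 2 * (\<Sum>n. exp (- 2 * a^2 * (real n + 1)^2))"
proof -
  have UNIV: "UNIV = insert 0 {k::int. int 0 < \<bar>k\<bar>}"
    by auto
  note tail = gauss_lattice_tail_le[OF assms, of 0]
  show "(\<lambda>k::int. exp (- 2 * a^2 * (real_of_int k)^2)) summable_on UNIV"
    unfolding UNIV using tail(1) by (simp add: summable_on_insert_iff)
  show "(\<Sum>\<^sub>\<infinity>k::int. exp (- 2 * a^2 * (real_of_int k)^2)) \<le> 1 + 2 * (\<Sum>n. exp (- 2 * a^2 * (real n + 1)^2))"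
    unfolding UNIV using tail by (simp add: infsum_insert)
qed

lemma sq_exp_kernel_lattice_shift:
  fixes x :: "real ^ 'n" and n :: "int ^ 'n"
  shows "sq_exp_kernel l (x + (1 / h) *\<^sub>R lat n) =
    (\<Prod>i\<in>UNIV. exp (- (1 / (2 * l^2)) * (x $ i + real_of_int (n $ i) / h)^2))"
  unfolding sq_exp_kernel_def power2_norm_vec_eq_sum
  by (simp add: lat_def exp_sum[symmetric] sum_divide_distrib sum_negf)

lemma norm_fourier_tr_lattice_term:
  fixes j :: "int ^ 'n" and x :: "real ^ 'n"
  assumes "0 < l"
  shows "norm (fourier_tr (sq_exp_kernel l) (h *\<^sub>R lat j) * exp (2 * pi * \<i> * complex_of_real (h * (lat j \<bullet> x))))
    = (sqrt (2 * pi) * l) ^ CARD('n) * (\<Prod>i\<in>UNIV. exp (- 2 * (pi * l * h)^2 * (real_of_int (j $ i))^2))"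
proof -
  have "norm (fourier_tr (sq_exp_kernel l) (h *\<^sub>R lat j))
      = (sqrt (2 * pi) * l) ^ CARD('n) * exp (- 2 * pi^2 * l^2 * (norm (h *\<^sub>R lat j))^2)"
    unfolding fourier_tr_sq_exp_kernel[OF assms] norm_of_real using assms by simp
  also have "exp (- 2 * pi^2 * l^2 * (norm (h *\<^sub>R lat j))^2)
      = (\<Prod>i\<in>UNIV. exp (- 2 * (pi * l * h)^2 * (real_of_int (j $ i))^2))"
    unfolding power2_norm_vec_eq_sum
    by (simp add: lat_def exp_sum[symmetric] sum_distrib_left power_mult_distrib algebra_simps)
  finally show ?thesis
    by (simp add: norm_mult norm_exp_eq_Re)
qed

lemma mult_power_card_pred: "(a::'a::monoid_mult) * a ^ (CARD('n::finite) - 1) = a ^ CARD('n)"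
  using finite_UNIV_card_ge_0[where 'a = 'n] by (simp flip: power_Suc)

lemma sq_exp_kernel_rate_ge:
  assumes "0 < l" "l \<le> 2 / sqrt pi"
  shows "25/64 \<le> 1 / (2 * l^2)"
proof -
  have "l^2 \<le> (2 / sqrt pi)^2"
    using assms by (intro power_mono) auto
  then have "2 * l^2 \<le> 8 / pi"
    by (simp add: power_divide)
  then have "1 / (8 / pi) \<le> 1 / (2 * l^2)"
    using assms by (intro divide_left_mono) auto
  moreover have "25/64 \<le> 1 / (8 / pi)"
    using pi_approx(1) by simp
  ultimately show ?thesis
    by linarith
qed

lemma sq_exp_kernel_lattice_sum_bound:
  fixes l h :: real and x :: "real ^ 'n"
  assumes l: "0 < l" "l \<le> 2 / sqrt pi" and h: "0 < h" "h \<le> 1" and x: "\<forall>i. \<bar>x $ i\<bar> \<le> 1"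
  shows "(\<lambda>n. sq_exp_kernel l (x + (1 / h) *\<^sub>R lat n)) summable_on {n. n \<noteq> 0}"
    and "\<bar>\<Sum>\<^sub>\<infinity>n\<in>{n :: int ^ 'n. n \<noteq> 0}. sq_exp_kernel l (x + (1 / h) *\<^sub>R lat n)\<bar>
      \<le> 2 * real CARD('n) * 3 ^ CARD('n) * exp (- (1/2) * ((1/h - 1) / l)^2)"
proof -
  define c where "c = 1 / (2 * l^2)"
  have c: "25/64 \<le> c"
    unfolding c_def by (rule sq_exp_kernel_rate_ge[OF l])
  define g where "g i k = exp (- c * (x $ i + real_of_int k / h)^2)" for i k
  define E where "E = exp (- c * (1/h - 1)^2)"
  have kernel: "sq_exp_kernel l (x + (1 / h) *\<^sub>R lat n) = (\<Prod>i\<in>UNIV. g i (n $ i))" for n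
    unfolding sq_exp_kernel_lattice_shift g_def c_def ..
  have g_nonneg: "0 \<le> g i k" for i k
    unfolding g_def by simp
  have g_summable: "g i summable_on UNIV" for i
    unfolding g_def by (rule shifted_gauss_lattice_sum_le_3(1)[OF c h])
  have "(\<lambda>n. \<Prod>i\<in>UNIV. g i (n $ i)) summable_on UNIV"
    using infsum_prod_vec(1)[OF g_nonneg g_summable] by simp
  then show "(\<lambda>n. sq_exp_kernel l (x + (1 / h) *\<^sub>R lat n)) summable_on {n. n \<noteq> 0}"
    unfolding kernel by (rule summable_on_subset_banach) simp
  have nonzero: "{n :: int ^ 'n. n \<noteq> 0} = {n. \<exists>i. n $ i \<in> {k. k \<noteq> 0}}"
    by (auto simp: vec_eq_iff)
  have "infsum (g i) {k. k \<noteq> 0} \<le> 6 * E" "infsum (g i) UNIV \<le> 3" for i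
    unfolding g_def E_def using x
    by (intro shifted_gauss_lattice_sum_nonzero_le shifted_gauss_lattice_sum_le_3(2) c h; simp)+
  then have "(\<Sum>\<^sub>\<infinity>n\<in>{n :: int ^ 'n. n \<noteq> 0}. \<Prod>i\<in>UNIV. g i (n $ i))
      \<le> CARD('n) * (6 * E) * 3 ^ (CARD('n) - 1)"
    unfolding nonzero by (intro infsum_prod_vec_some_coordinate_le[OF g_nonneg g_summable])
  also have "\<dots> = 2 * real CARD('n) * 3 ^ CARD('n) * exp (- (1/2) * ((1/h - 1) / l)^2)"
    unfolding E_def c_def mult_power_card_pred[of 3, symmetric] by (simp add: power_divide)
  finally have "(\<Sum>\<^sub>\<infinity>n\<in>{n :: int ^ 'n. n \<noteq> 0}. \<Prod>i\<in>UNIV. g i (n $ i))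
      \<le> 2 * real CARD('n) * 3 ^ CARD('n) * exp (- (1/2) * ((1/h - 1) / l)^2)" .
  moreover have "0 \<le> (\<Sum>\<^sub>\<infinity>n\<in>{n :: int ^ 'n. n \<noteq> 0}. \<Prod>i\<in>UNIV. g i (n $ i))"
    by (intro infsum_nonneg prod_nonneg g_nonneg)
  ultimately show "\<bar>\<Sum>\<^sub>\<infinity>n\<in>{n :: int ^ 'n. n \<noteq> 0}. sq_exp_kernel l (x + (1 / h) *\<^sub>R lat n)\<bar>
      \<le> 2 * real CARD('n) * 3 ^ CARD('n) * exp (- (1/2) * ((1/h - 1) / l)^2)"
    unfolding kernel by simp
qed

lemma gauss_vec_lattice_tail_le:
  fixes a :: real and m :: nat
  assumes a: "0 < a"
  defines "Q \<equiv> \<Sum>n. exp (- 2 * a^2 * (real n + 1)^2)"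
  shows "(\<lambda>j::int ^ 'n. \<Prod>i\<in>UNIV. exp (- 2 * a^2 * (real_of_int (j $ i))^2)) summable_on - Jset m"
    and "(\<Sum>\<^sub>\<infinity>j\<in>- (Jset m :: (int ^ 'n) set). \<Prod>i\<in>UNIV. exp (- 2 * a^2 * (real_of_int (j $ i))^2))
      \<le> CARD('n) * exp (- 2 * a^2 * (real m)^2) * (1 + 2 * Q) ^ CARD('n)"
proof -
  define E where "E = exp (- 2 * a^2 * (real m)^2)"
  define w where "w k = exp (- 2 * a^2 * (real_of_int k)^2)" for k :: int
  have w_nonneg: "0 \<le> w k" for k
    unfolding w_def by simp
  have w_summable: "w summable_on UNIV"
    unfolding w_def using gauss_lattice_sum_le(1)[OF a] by simp
  have "(\<lambda>j::int ^ 'n. \<Prod>i\<in>UNIV. w (j $ i)) summable_on UNIV"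
    using infsum_prod_vec(1)[OF w_nonneg w_summable] by simp
  then show "(\<lambda>j::int ^ 'n. \<Prod>i\<in>UNIV. exp (- 2 * a^2 * (real_of_int (j $ i))^2)) summable_on - Jset m"
    unfolding w_def by (rule summable_on_subset_banach) simp
  have complement: "- Jset m = {j::int ^ 'n. \<exists>i. j $ i \<in> {k. int m < \<bar>k\<bar>}}"
    by (auto simp: Jset_def not_le) (meson not_le)
  have "infsum w {k. int m < \<bar>k\<bar>} \<le> 2 * E * Q" "infsum w UNIV \<le> 1 + 2 * Q"
    unfolding w_def E_def Q_def using gauss_lattice_tail_le(2)[OF a] gauss_lattice_sum_le(2)[OF a] by simp_all
  then have "(\<Sum>\<^sub>\<infinity>j\<in>- (Jset m :: (int ^ 'n) set). \<Prod>i\<in>UNIV. w (j $ i))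
      \<le> CARD('n) * (2 * E * Q) * (1 + 2 * Q) ^ (CARD('n) - 1)"
    unfolding complement
    by (rule infsum_prod_vec_some_coordinate_le[where f = "\<lambda>_::'n. w", OF w_nonneg w_summable])
  also have "\<dots> \<le> CARD('n) * E * (1 + 2 * Q) ^ CARD('n)"
  proof -
    have "0 \<le> Q"
      unfolding Q_def by (rule gauss_pos_sum_nonneg[OF a])
    then have "2 * Q * (1 + 2 * Q) ^ (CARD('n) - 1) \<le> (1 + 2 * Q) ^ CARD('n)"
      unfolding mult_power_card_pred[of "1 + 2 * Q", symmetric] by (intro mult_right_mono) auto
    then show ?thesis
      using mult_left_mono[of _ _ "CARD('n) * E"] by (simp add: E_def mult_ac)
  qed
  finally show "(\<Sum>\<^sub>\<infinity>j\<in>- (Jset m :: (int ^ 'n) set). \<Prod>i\<in>UNIV. exp (- 2 * a^2 * (real_of_int (j $ i))^2))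
      \<le> CARD('n) * exp (- 2 * a^2 * (real m)^2) * (1 + 2 * Q) ^ CARD('n)"
    unfolding w_def E_def .
qed

lemma sqrt_two_pi_eq: "sqrt (2 * pi) = sqrt (2 / pi) * pi"
proof -
  have "sqrt (2 * pi) = sqrt ((2 / pi) * (pi * pi))"
    by (simp add: field_simps)
  also have "\<dots> = sqrt (2 / pi) * pi"
    by (simp only: real_sqrt_mult real_sqrt_mult_self abs_of_pos[OF pi_gt_zero])
  finally show ?thesis .
qed

lemma sq_exp_kernel_fourier_tail_bound:
  fixes l h :: real and x :: "real ^ 'n" and m :: nat
  assumes l: "0 < l" "l \<le> 2 / sqrt pi" and h: "0 < h" "h \<le> 1"
  defines "F \<equiv> \<lambda>j. fourier_tr (sq_exp_kernel l) (h *\<^sub>R lat j)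
    * exp (2 * pi * \<i> * complex_of_real (h * (lat j \<bullet> x)))"
  shows "F summable_on (- Jset m)"
    and "norm (complex_of_real (h ^ CARD('n)) * (\<Sum>\<^sub>\<infinity>j\<in>(- Jset m). F j))
      \<le> 2 * real CARD('n) * 4 ^ CARD('n) * exp (- 2 * (pi * l * h * real m)^2)"
proof -
  define a where "a = pi * l * h"
  define C where "C = sqrt (2 * pi) * l"
  define Q where "Q = (\<Sum>n. exp (- 2 * a^2 * (real n + 1)^2))"
  define W where "W j = (\<Prod>i\<in>UNIV. exp (- 2 * a^2 * (real_of_int (j $ i))^2))" for j :: "int ^ 'n"
  have a: "0 < a"
    unfolding a_def using l h by simp
  have hC: "h * C = a * sqrt (2 / pi)"
    unfolding a_def C_def sqrt_two_pi_eq by (simp add: algebra_simps)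
  have "h * C \<le> 1 * (sqrt (2 * pi) * (2 / sqrt pi))"
    unfolding C_def using l h by (intro mult_mono) auto
  then have "a * sqrt (2 / pi) \<le> 2 * sqrt 2"
    unfolding hC by (simp add: real_sqrt_mult field_simps)
  from gauss_pos_sum_weighted_le[OF a this] have weighted: "h * C * (1 + 2 * Q) \<le> 4"
    unfolding hC Q_def .
  have norm_F: "norm (F j) = C ^ CARD('n) * W j" for j
    unfolding F_def norm_fourier_tr_lattice_term[OF l(1)] C_def W_def a_def ..
  have W_summable: "W summable_on - Jset m"
    unfolding W_def[abs_def] by (rule gauss_vec_lattice_tail_le(1)[OF a])
  have W_tail: "infsum W (- Jset m) \<le> CARD('n) * exp (- 2 * a^2 * (real m)^2) * (1 + 2 * Q) ^ CARD('n)"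
    unfolding W_def[abs_def] Q_def by (rule gauss_vec_lattice_tail_le(2)[OF a])
  have norm_summable: "(\<lambda>j. norm (F j)) summable_on - Jset m"
    unfolding norm_F by (intro summable_on_cmult_right W_summable)
  then show "F summable_on (- Jset m)"
    by (rule abs_summable_summable)
  have "norm (complex_of_real (h ^ CARD('n)) * infsum F (- Jset m)) = h ^ CARD('n) * norm (infsum F (- Jset m))"
    using h by (simp add: norm_mult norm_power)
  also have "\<dots> \<le> h ^ CARD('n) * infsum (\<lambda>j. norm (F j)) (- Jset m)"
    using h by (intro mult_left_mono norm_infsum_bound norm_summable) auto
  also have "\<dots> = (h * C) ^ CARD('n) * infsum W (- Jset m)"
    unfolding norm_F infsum_cmult_right' by (simp add: power_mult_distrib)
  also have "\<dots> \<le> (h * C) ^ CARD('n) * (CARD('n) * exp (- 2 * a^2 * (real m)^2) * (1 + 2 * Q) ^ CARD('n))"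
    using W_tail h l by (intro mult_left_mono) (auto simp: C_def)
  also have "\<dots> = CARD('n) * exp (- 2 * a^2 * (real m)^2) * (h * C * (1 + 2 * Q)) ^ CARD('n)"
    by (simp add: power_mult_distrib)
  also have "\<dots> \<le> CARD('n) * exp (- 2 * a^2 * (real m)^2) * 4 ^ CARD('n)"
    using weighted gauss_pos_sum_nonneg[OF a] h l by (intro mult_left_mono power_mono) (auto simp: C_def Q_def)
  also have "\<dots> \<le> 2 * real CARD('n) * 4 ^ CARD('n) * exp (- 2 * (pi * l * h * real m)^2)"
    unfolding a_def by (simp add: power_mult_distrib mult_ac)
  finally show "norm (complex_of_real (h ^ CARD('n)) * (\<Sum>\<^sub>\<infinity>j\<in>(- Jset m). F j))
      \<le> 2 * real CARD('n) * 4 ^ CARD('n) * exp (- 2 * (pi * l * h * real m)^2)" .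
qed

theorem theorem3p2:
  fixes l h :: real
  assumes hl: "0 < l" "l \<le> 2 / sqrt pi"
    and hh: "0 < h" "h < 1"
  shows "(\<forall>x :: real ^ 'n. (\<forall>i. \<bar>x $ i\<bar> \<le> 1) \<longrightarrow>
            ((\<lambda>n. sq_exp_kernel l (x + (1 / h) *\<^sub>R lat n)) summable_on {n :: int ^ 'n. n \<noteq> 0}) \<and>
            \<bar>\<Sum>\<^sub>\<infinity>n\<in>{n :: int ^ 'n. n \<noteq> 0}. sq_exp_kernel l (x + (1 / h) *\<^sub>R lat n)\<bar>
              \<le> 2 * real CARD('n) * 3 ^ CARD('n) * exp (- (1/2) * ((1/h - 1) / l)^2))
       \<and> (\<forall>(m :: nat) (x :: real ^ 'n).
            ((\<lambda>j. fourier_tr (sq_exp_kernel l) (h *\<^sub>R lat j) * exp (2 * pi * \<i> * complex_of_real (h * (lat j \<bullet> x))))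
               summable_on (- Jset m)) \<and>
            norm (complex_of_real (h ^ CARD('n)) *
              (\<Sum>\<^sub>\<infinity>j\<in>(- Jset m). fourier_tr (sq_exp_kernel l) (h *\<^sub>R lat j) * exp (2 * pi * \<i> * complex_of_real (h * (lat j \<bullet> x)))))
              \<le> 2 * real CARD('n) * 4 ^ CARD('n) * exp (- 2 * (pi * l * h * real m)^2))"
proof -
  have h: "0 < h" "h \<le> 1"
    using hh by simp_all
  show ?thesis
    using sq_exp_kernel_lattice_sum_bound[OF hl h] sq_exp_kernel_fourier_tail_bound[OF hl h] by blast
qed

end
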